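(* For every $\epsilon\ge1$ and all sufficiently large $n$, there exists a binary $k$-PIR code $[N,n,k]^P$ with $k=\Theta(n^\epsilon)$ and $N=\mathcal{O}(n^{\epsilon^+})$, i.e., $N=\mathcal{O}(n^{\epsilon+\tau})$ for every $\tau>0$.
   Context: A binary $[N,n,k]^P$ code ($k$-PIR code) is a binary linear code of length $N$ encoding $n$ information bits such that for every information bit $x_i$ there exist $k$ mutually disjoint sets $R_{i,1},\dots,R_{i,k}\subseteq\{1,\dots,N\}$ such that, for each $j$, $x_i$ is a function of the codeword bits indexed by $R_{i,j}$. *)

theory Defs
  imports Complex_Main "HOL-Library.Z2" "HOL-Library.Landau_Symbols"
begin

text \<open>Messages: binary vectors of length n, represented as functions nat \<Rightarrow> bit
  vanishing outside {..<n}.\<close>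
definition msgs :: "nat \<Rightarrow> (nat \<Rightarrow> bit) set" where
  "msgs n = {x. \<forall>i. n \<le> i \<longrightarrow> x i = 0}"

definition encode :: "(nat \<Rightarrow> nat \<Rightarrow> bit) \<Rightarrow> nat \<Rightarrow> nat \<Rightarrow> (nat \<Rightarrow> bit) \<Rightarrow> (nat \<Rightarrow> bit)" where
  "encode G N n x = (\<lambda>j. if j < N then (\<Sum>i<n. G j i * x i) else 0)"

definition restrict_word :: "nat set \<Rightarrow> (nat \<Rightarrow> bit) \<Rightarrow> (nat \<Rightarrow> bit)" where
  "restrict_word R c = (\<lambda>j. if j \<in> R then c j else 0)"

definition is_PIR_code :: "(nat \<Rightarrow> nat \<Rightarrow> bit) \<Rightarrow> nat \<Rightarrow> nat \<Rightarrow> nat \<Rightarrow> bool" where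
  "is_PIR_code G N n k \<longleftrightarrow>
     inj_on (encode G N n) (msgs n) \<and>
     (\<forall>i<n. \<exists>R :: nat \<Rightarrow> nat set.
        (\<forall>j<k. R j \<subseteq> {..<N}) \<and>
        (\<forall>j<k. \<forall>j'<k. j \<noteq> j' \<longrightarrow> R j \<inter> R j' = {}) \<and>
        (\<forall>j<k. \<exists>f :: (nat \<Rightarrow> bit) \<Rightarrow> bit.
           \<forall>x\<in>msgs n. f (restrict_word (R j) (encode G N n x)) = x i))"

definition PIR_code_exists :: "nat \<Rightarrow> nat \<Rightarrow> nat \<Rightarrow> bool" where
  "PIR_code_exists N n k \<longleftrightarrow> (\<exists>G. is_PIR_code G N n k)"

end

theory Submission
  imports Defs "HOL-Algebra.Algebraic_Closure_Type" "HOL-Library.Countable_Set"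
begin

text \<open>
  Let \<open>q = 2^s\<close> and place the \<open>n\<close> message bits on a grid \<open>A^m \<subseteq> GF(q)^m\<close> with
  \<open>|A| = a\<close>, \<open>n \<le> a^m\<close>; let \<open>f\<close> be the interpolating polynomial, of degree \<open>< a\<close> in each
  variable. The code has one bit \<open>tr(w f(p))\<close> for every \<open>(w, p) \<in> GF(q) \<times> GF(q)^m\<close>, so
  \<open>N = q^(m+1)\<close>; as the trace form is nondegenerate, the \<open>q\<close> bits over \<open>p\<close> determine \<open>f(p)\<close>.
  On a line through the grid point of bit \<open>i\<close>, \<open>f\<close> is a polynomial of degree
  \<open>\<le> m(a - 1) < q - 1\<close> in the line parameter, so its restriction to the line minus that point determines bit
  \<open>i\<close>. The \<open>q^(m-1)\<close> lines through the point whose direction has first coordinate \<open>1\<close>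
  meet only there, giving \<open>k = q^(m-1)\<close> disjoint recovery sets.

  With \<open>a = \<lceil>n^(1/m)\<rceil>\<close> and \<open>q \<approx> m n^(\<epsilon>/(m-1))\<close> this gives \<open>k \<ge> n^\<epsilon>\<close> and
  \<open>N \<le> O(m)^(m+1) n^(\<epsilon>(m+1)/(m-1))\<close>. Letting \<open>m\<close> grow like \<open>(ln n)^(1/4)\<close> makes both
  \<open>O(m)^(m+1)\<close> and \<open>n^(2\<epsilon>/(m-1))\<close> of size \<open>n^o(1)\<close>.
\<close>

section \<open>Finite subfields of an algebraically closed field and their trace\<close>

lemma poly_pderiv_at_double_root:
  fixes p :: "'a::idom poly"
  assumes "[:-x, 1:] ^ 2 dvd p"
  shows "poly (pderiv p) x = 0"
proof -
  obtain r where "p = [:-x, 1:] * [:-x, 1:] * r" using assms by (auto simp: power2_eq_square)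
  then show ?thesis by (simp only: pderiv_mult poly_add poly_mult) simp
qed

lemma card_roots_eq_degree:
  fixes p :: "'a::alg_closed_field poly"
  assumes "p \<noteq> 0" and simple: "\<And>x. poly p x = 0 \<Longrightarrow> poly (pderiv p) x \<noteq> 0"
  shows "card {x. poly p x = 0} = degree p"
proof -
  obtain A where A: "size A = degree p" "p = smult (lead_coeff p) (\<Prod>x\<in>#A. [:-x, 1:])"
    using alg_closed_imp_factorization[OF \<open>p \<noteq> 0\<close>] by blast
  have roots: "{x. poly p x = 0} = set_mset A"
    using \<open>p \<noteq> 0\<close> by (subst A(2)) (auto simp: poly_prod_mset prod_mset_zero_iff)
  have "count A x \<le> 1" for x
  proof (rule ccontr)
    assume "\<not> count A x \<le> 1"
    then have "{#x, x#} \<subseteq># A" by (simp add: subseteq_mset_def)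
    then obtain B where "A = {#x, x#} + B" by (metis subset_mset.add_diff_inverse)
    then have "p = smult (lead_coeff p) ([:-x, 1:] * ([:-x, 1:] * (\<Prod>y\<in>#B. [:-y, 1:])))"
      by (subst A(2)) simp
    then have "[:-x, 1:] ^ 2 dvd p" by (metis dvd_smult dvd_triv_left mult.assoc power2_eq_square)
    moreover have "poly p x = 0" using \<open>{#x, x#} \<subseteq># A\<close> roots by (auto dest: mset_subset_eqD)
    ultimately show False using simple poly_pderiv_at_double_root by blast
  qed
  then have "A = mset_set (set_mset A)"
    by (intro multiset_eqI) (simp add: count_mset_set' le_Suc_eq count_eq_zero_iff)
  then show ?thesis by (metis roots A(1) size_mset_set)
qed

definition GF :: "nat \<Rightarrow> 'a::field_prime_char set" where
  "GF s = {x. x ^ (CHAR('a) ^ s) = x}"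

lemma GF_0 [simp]: "0 \<in> GF s"
  by (simp add: GF_def)

lemma GF_1 [simp]: "1 \<in> GF s"
  by (simp add: GF_def)

lemma GF_add: "x \<in> GF s \<Longrightarrow> y \<in> GF s \<Longrightarrow> x + y \<in> GF s"
  by (simp add: GF_def freshmans_dream')

lemma GF_uminus:
  assumes "x \<in> GF s"
  shows "- x \<in> GF s"
proof -
  have "x ^ (CHAR('a) ^ s) + (- x) ^ (CHAR('a) ^ s) = (x + - x) ^ (CHAR('a) ^ s)"
    by (rule freshmans_dream'[symmetric]) simp_all
  then show ?thesis using assms by (simp add: GF_def add_eq_0_iff power_0_left)
qed

lemma GF_diff: "x \<in> GF s \<Longrightarrow> y \<in> GF s \<Longrightarrow> x - y \<in> GF s"
  using GF_add[of x s "- y"] GF_uminus[of y s] by simp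

lemma GF_mult: "x \<in> GF s \<Longrightarrow> y \<in> GF s \<Longrightarrow> x * y \<in> GF s"
  by (simp add: GF_def power_mult_distrib)

lemma GF_inverse: "x \<in> GF s \<Longrightarrow> inverse x \<in> GF s"
  by (simp add: GF_def power_inverse)

lemma GF_divide: "x \<in> GF s \<Longrightarrow> y \<in> GF s \<Longrightarrow> x / y \<in> GF s"
  by (simp add: divide_inverse GF_mult GF_inverse)

lemma GF_sum: "(\<And>i. i \<in> A \<Longrightarrow> f i \<in> GF s) \<Longrightarrow> sum f A \<in> GF s"
  by (induction A rule: infinite_finite_induct) (auto intro: GF_add)

lemma GF_prod: "(\<And>i. i \<in> A \<Longrightarrow> f i \<in> GF s) \<Longrightarrow> prod f A \<in> GF s"
  by (induction A rule: infinite_finite_induct) (auto intro: GF_mult)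

lemma GF_1_power: "(c :: 'a::field_prime_char) \<in> GF 1 \<Longrightarrow> c ^ (CHAR('a) ^ j) = c"
  by (induction j) (auto simp: GF_def power_mult)

text \<open>\<open>GF s\<close> is the set of roots of the separable polynomial \<open>X\<^sup>q - X\<close>, \<open>q = CHAR('a) ^ s\<close>,
  whose derivative is the constant \<open>-1\<close>.\<close>

lemma card_GF:
  assumes "s \<ge> 1"
  shows "finite (GF s :: 'a::{alg_closed_field, field_prime_char} set)"
    and "card (GF s :: 'a set) = CHAR('a) ^ s"
proof -
  define q where "q = CHAR('a) ^ s"
  have "CHAR('a) \<ge> 2" using prime_ge_2_nat[OF CHAR_prime] .
  then have q: "q \<ge> 2" unfolding q_def using assms
    by (metis power_increasing power_one_right le_trans one_le_numeral)
  define P :: "'a poly" where "P = monom 1 q + [:0, -1:]"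
  have deg: "degree P = q" unfolding P_def using q
    by (subst degree_add_eq_left) (auto simp: degree_monom_eq)
  then have "P \<noteq> 0" using q by auto
  have roots: "GF s = {x. poly P x = 0}"
    by (simp add: GF_def P_def poly_monom q_def)
  have "(of_nat q :: 'a) = 0" using assms by (simp add: q_def of_nat_eq_0_iff_char_dvd)
  then have "pderiv P = [:-1:]" by (simp add: P_def pderiv_add pderiv_monom pderiv_pCons)
  then have "card {x. poly P x = 0} = degree P"
    by (intro card_roots_eq_degree \<open>P \<noteq> 0\<close>) simp
  then show "card (GF s :: 'a set) = CHAR('a) ^ s" using roots deg q_def by simp
  show "finite (GF s :: 'a set)" using roots poly_roots_finite[OF \<open>P \<noteq> 0\<close>] by simp
qed

definition trace :: "nat \<Rightarrow> 'a::field_prime_char \<Rightarrow> 'a" where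
  "trace s y = (\<Sum>j<s. y ^ (CHAR('a) ^ j))"

lemma trace_0 [simp]: "trace s 0 = 0"
  by (simp add: trace_def power_0_left)

lemma trace_add: "trace s (x + y) = trace s x + trace s y"
  by (simp add: trace_def freshmans_dream' sum.distrib)

lemma trace_diff: "trace s (x - y) = trace s x - trace s y"
  using trace_add[of s "x - y" y] by (simp add: algebra_simps)

lemma trace_sum: "trace s (\<Sum>i\<in>A. f i) = (\<Sum>i\<in>A. trace s (f i))"
  by (induction A rule: infinite_finite_induct) (auto simp: trace_add)

lemma trace_scale: "c \<in> GF 1 \<Longrightarrow> trace s (c * y) = c * trace s y"
  by (simp add: trace_def power_mult_distrib GF_1_power sum_distrib_left)

lemma trace_in_GF_1:
  assumes "y \<in> GF s"
  shows "trace s y \<in> GF 1"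
proof -
  define f where "f j = y ^ (CHAR('a) ^ j)" for j
  have "trace s y ^ CHAR('a) = (\<Sum>j<s. f (Suc j))"
    by (simp add: trace_def f_def freshmans_dream_sum flip: power_mult) (simp add: mult.commute)
  also have "\<dots> = (\<Sum>j<Suc s. f j) - f 0"
    by (simp add: sum.lessThan_Suc_shift del: sum.lessThan_Suc)
  also have "\<dots> = trace s y"
    using assms by (simp add: f_def trace_def GF_def)
  finally show ?thesis by (simp add: GF_def)
qed

lemma trace_nondegenerate:
  fixes y :: "'a::{alg_closed_field, field_prime_char}"
  assumes s: "s \<ge> 1" and y: "y \<in> GF s" "y \<noteq> 0"
  shows "\<exists>w\<in>GF s. trace s (w * y) \<noteq> 0"
proof (rule ccontr)
  assume "\<not> ?thesis"
  then have vanish: "trace s (w * y) = 0" if "w \<in> GF s" for w using that by blast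
  have p: "CHAR('a) > 1" using prime_gt_1_nat[OF CHAR_prime] .
  define T :: "'a poly" where "T = (\<Sum>j<s. monom 1 (CHAR('a) ^ j))"
  have poly_T: "poly T z = trace s z" for z by (simp add: T_def trace_def poly_sum poly_monom)
  have "coeff T (CHAR('a) ^ (s - 1)) = 1"
  proof -
    have "coeff T (CHAR('a) ^ (s - 1)) = (\<Sum>j\<in>{s - 1}. 1)"
      unfolding T_def coeff_sum coeff_monom using s p
      by (intro sum.mono_neutral_cong_right) (auto simp: power_inject_exp)
    then show ?thesis by simp
  qed
  then have "T \<noteq> 0" by auto
  have "degree T \<le> CHAR('a) ^ (s - 1)"
    unfolding T_def using p by (intro degree_sum_le) (auto simp: degree_monom_eq intro!: power_increasing)
  have "GF s \<subseteq> {z. poly T z = 0}"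
  proof
    fix z :: 'a assume z: "z \<in> GF s"
    then have "trace s (z / y * y) = 0" using y by (intro vanish GF_divide)
    then show "z \<in> {z. poly T z = 0}" using y by (simp add: poly_T)
  qed
  then have "card (GF s :: 'a set) \<le> degree T"
    using card_mono[OF poly_roots_finite[OF \<open>T \<noteq> 0\<close>]] card_poly_roots_bound[OF \<open>T \<noteq> 0\<close>]
    by (meson le_trans)
  then have "CHAR('a) ^ s \<le> CHAR('a) ^ (s - 1)"
    using card_GF(2)[OF s, where 'a = 'a] \<open>degree T \<le> _\<close> by simp
  moreover have "CHAR('a) ^ (s - 1) < CHAR('a) ^ s"
    using s p by (intro power_strict_increasing) auto
  ultimately show False by simp
qed

section \<open>The algebraic closure of \<open>\<bbbF>\<^sub>2\<close>\<close>

lemma of_nat_bit: "(of_nat n :: bit) = (if even n then 0 else 1)"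
  by (induction n) auto

lemma CHAR_bit [simp]: "CHAR(bit) = 2"
  by (rule CHAR_eqI) (auto simp: of_nat_bit split: if_splits)

instance bit :: field_prime_char
  by standard simp

instance alg_closure :: (field_prime_char) field_prime_char
  by standard (auto intro!: exI[of _ "CHAR('a)"] simp flip: to_ac_of_nat)

type_synonym F2bar = "bit alg_closure"

lemma GF_1_F2bar: "GF 1 = range (to_ac :: bit \<Rightarrow> F2bar)"
proof -
  have "range (to_ac :: bit \<Rightarrow> F2bar) = {0, 1}"
    by (auto simp: image_iff)
  moreover have "x ^ 2 = x \<longleftrightarrow> x \<in> {0, 1}" for x :: F2bar
  proof -
    have "x ^ 2 = x \<longleftrightarrow> x * (x - 1) = 0" by (simp add: power2_eq_square algebra_simps)
    then show ?thesis by auto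
  qed
  ultimately show ?thesis by (auto simp: GF_def)
qed

section \<open>Interpolation on a grid and restriction to lines\<close>

definition lagrange :: "'a::field set \<Rightarrow> nat \<Rightarrow> (nat \<Rightarrow> 'a) \<Rightarrow> (nat \<Rightarrow> 'a) \<Rightarrow> 'a" where
  "lagrange A m g v = (\<Prod>l<m. \<Prod>r\<in>A - {g l}. (v l - r) / (g l - r))"

lemma lagrange_restrict [simp]: "lagrange A m g (restrict v {..<m}) = lagrange A m g v"
  by (simp add: lagrange_def)

lemma lagrange_at_grid:
  assumes "finite A" "g \<in> (\<Pi>\<^sub>E l\<in>{..<m}. A)" "g' \<in> (\<Pi>\<^sub>E l\<in>{..<m}. A)"
  shows "lagrange A m g g' = (if g = g' then 1 else 0)"
proof (cases "g = g'")
  case True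
  have "(\<Prod>r\<in>A - {g l}. (g l - r) / (g l - r)) = 1" for l
    by (rule prod.neutral) auto
  then show ?thesis using True by (simp add: lagrange_def)
next
  case False
  then obtain l where l: "l < m" "g' l \<noteq> g l" using PiE_ext[OF assms(2,3)] by (metis lessThan_iff)
  then have "g' l \<in> A - {g l}" using PiE_mem[OF assms(3)] by simp
  then have "(\<Prod>r\<in>A - {g l}. (g' l - r) / (g l - r)) = 0"
    using \<open>finite A\<close> by (intro prod_zero) auto
  then have "lagrange A m g g' = 0"
    unfolding lagrange_def using l(1) by (intro prod_zero) auto
  then show ?thesis using False by simp
qed

lemma degree_prod_linear_le: "finite S \<Longrightarrow> degree (\<Prod>r\<in>S. [:a r, b r:]) \<le> card S"
proof -
  assume "finite S"
  then have "degree (\<Prod>r\<in>S. [:a r, b r:]) \<le> sum (degree \<circ> (\<lambda>r. [:a r, b r:])) S"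
    by (rule degree_prod_sum_le)
  also have "\<dots> \<le> (\<Sum>r\<in>S. 1)"
    by (intro sum_mono) simp
  finally show ?thesis by simp
qed

lemma lagrange_along_line:
  assumes "finite A" "g \<in> (\<Pi>\<^sub>E l\<in>{..<m}. A)"
  shows "\<exists>P. degree P \<le> m * (card A - 1) \<and> (\<forall>t. lagrange A m g (\<lambda>l. u l + t * d l) = poly P t)"
proof (intro exI conjI allI)
  define P where "P = (\<Prod>l<m. \<Prod>r\<in>A - {g l}. [:(u l - r) / (g l - r), d l / (g l - r):])"
  show "lagrange A m g (\<lambda>l. u l + t * d l) = poly P t" for t
    unfolding lagrange_def P_def poly_prod
    by (intro prod.cong refl) (simp add: add_divide_distrib diff_divide_distrib algebra_simps)
  have "degree P \<le> (\<Sum>l<m. card (A - {g l}))"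
    unfolding P_def using \<open>finite A\<close>
    by (intro order_trans[OF degree_prod_sum_le] sum_mono) (auto intro: degree_prod_linear_le)
  also have "\<dots> = (\<Sum>l<m. card A - 1)"
    using assms by (intro sum.cong) (auto simp: card_Diff_singleton PiE_iff)
  finally show "degree P \<le> m * (card A - 1)" by simp
qed

lemma lagrange_in_GF:
  assumes "A \<subseteq> GF s" "\<And>l. l < m \<Longrightarrow> g l \<in> GF s" "\<And>l. l < m \<Longrightarrow> v l \<in> GF s"
  shows "lagrange A m g v \<in> GF s"
  unfolding lagrange_def using assms by (intro GF_prod GF_divide GF_diff) auto

definition punctured_line :: "'a::field set \<Rightarrow> nat \<Rightarrow> (nat \<Rightarrow> 'a) \<Rightarrow> (nat \<Rightarrow> 'a) \<Rightarrow> (nat \<Rightarrow> 'a) set"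
  where "punctured_line F m u d = (\<lambda>t. \<lambda>l\<in>{..<m}. u l + t * d l) ` (F - {0})"

definition directions :: "'a::field set \<Rightarrow> nat \<Rightarrow> (nat \<Rightarrow> 'a) set" where
  "directions F m = {d \<in> (\<Pi>\<^sub>E l\<in>{..<m}. F). d 0 = 1}"

lemma card_directions:
  assumes "1 \<in> F" "m \<ge> 1"
  shows "card (directions F m) = card F ^ (m - 1)"
proof -
  have "directions F m = (\<Pi>\<^sub>E l\<in>{..<m}. if l = 0 then {1} else F)" (is "_ = ?P")
  proof (intro equalityI subsetI)
    fix d assume "d \<in> directions F m"
    then show "d \<in> ?P" by (simp add: directions_def PiE_iff)
  next
    fix d assume d: "d \<in> ?P"
    then have "d 0 = 1" using assms PiE_mem[OF d, of 0] by simp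
    moreover have "d l \<in> F" if "l < m" for l
      using PiE_mem[OF d, of l] that assms \<open>d 0 = 1\<close> by (auto split: if_splits)
    ultimately show "d \<in> directions F m" using d by (simp add: directions_def PiE_iff)
  qed
  then have "card (directions F m) = (\<Prod>l<m. card (if l = 0 then {1} else F))"
    by (simp add: card_PiE)
  also have "\<dots> = (\<Prod>l\<in>{..<m} - {0}. card F)"
    using assms by (subst prod.remove[of _ 0]) (auto intro!: prod.cong)
  finally show ?thesis using assms by simp
qed

lemma punctured_lines_disjoint:
  assumes "m \<ge> 1" "d \<in> directions F m" "d' \<in> directions F m"
    and "p \<in> punctured_line F m u d" "p \<in> punctured_line F m u d'"
  shows "d = d'"
proof -
  obtain t where t: "t \<in> F - {0}" "p = (\<lambda>l\<in>{..<m}. u l + t * d l)"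
    using assms(4) unfolding punctured_line_def by blast
  obtain t' where t': "p = (\<lambda>l\<in>{..<m}. u l + t' * d' l)"
    using assms(5) unfolding punctured_line_def by blast
  have same: "t * d l = t' * d' l" if "l < m" for l
    using fun_cong[OF t(2), of l] fun_cong[OF t', of l] that by simp
  have "t = t'" using same[of 0] assms(1-3) by (simp add: directions_def)
  then have "d l = d' l" if "l < m" for l using same[OF that] t(1) by simp
  then show ?thesis using assms(2,3) by (auto simp: directions_def intro: PiE_ext)
qed

lemma line_point_in_PiE:
  assumes "u \<in> (\<Pi>\<^sub>E l\<in>{..<m}. GF s)" "d \<in> (\<Pi>\<^sub>E l\<in>{..<m}. GF s)" "t \<in> GF s"
  shows "(\<lambda>l\<in>{..<m}. u l + t * d l) \<in> (\<Pi>\<^sub>E l\<in>{..<m}. GF s)"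
  using assms by (auto intro!: GF_add GF_mult)

section \<open>The trace code\<close>

definition grid_point :: "F2bar set \<Rightarrow> nat \<Rightarrow> nat \<Rightarrow> nat \<Rightarrow> F2bar" where
  "grid_point A m = from_nat_into (\<Pi>\<^sub>E l\<in>{..<m}. A)"

definition interpolant :: "F2bar set \<Rightarrow> nat \<Rightarrow> nat \<Rightarrow> (nat \<Rightarrow> bit) \<Rightarrow> (nat \<Rightarrow> F2bar) \<Rightarrow> F2bar" where
  "interpolant A m n x v = (\<Sum>i<n. to_ac (x i) * lagrange A m (grid_point A m i) v)"

definition coordinate :: "nat \<Rightarrow> nat \<Rightarrow> nat \<Rightarrow> F2bar \<times> (nat \<Rightarrow> F2bar)" where
  "coordinate s m = from_nat_into (GF s \<times> (\<Pi>\<^sub>E l\<in>{..<m}. GF s))"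

definition direction :: "nat \<Rightarrow> nat \<Rightarrow> nat \<Rightarrow> nat \<Rightarrow> F2bar" where
  "direction s m = from_nat_into (directions (GF s) m)"

definition trace_generator :: "nat \<Rightarrow> nat \<Rightarrow> F2bar set \<Rightarrow> nat \<Rightarrow> nat \<Rightarrow> bit" where
  "trace_generator s m A c i =
     (case coordinate s m c of (w, p) \<Rightarrow> of_ac (trace s (w * lagrange A m (grid_point A m i) p)))"

definition recovery_set :: "nat \<Rightarrow> nat \<Rightarrow> F2bar set \<Rightarrow> nat \<Rightarrow> nat \<Rightarrow> nat set" where
  "recovery_set s m A i j = {c. c < (2 ^ s) ^ Suc m \<and>
     snd (coordinate s m c) \<in> punctured_line (GF s) m (grid_point A m i) (direction s m j)}"

lemma bij_betw_grid_point:
  "finite A \<Longrightarrow> bij_betw (grid_point A m) {..<card A ^ m} (\<Pi>\<^sub>E l\<in>{..<m}. A)"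
  unfolding grid_point_def using bij_betw_from_nat_into_finite[of "\<Pi>\<^sub>E l\<in>{..<m}. A"]
  by (simp add: card_PiE finite_PiE)

lemma grid_point_in_PiE:
  "finite A \<Longrightarrow> i < card A ^ m \<Longrightarrow> grid_point A m i \<in> (\<Pi>\<^sub>E l\<in>{..<m}. A)"
  using bij_betw_apply[OF bij_betw_grid_point] by blast

lemma bij_betw_coordinate:
  assumes "s \<ge> 1"
  shows "bij_betw (coordinate s m) {..<(2 ^ s) ^ Suc m} (GF s \<times> (\<Pi>\<^sub>E l\<in>{..<m}. GF s))"
proof -
  let ?C = "(GF s :: F2bar set) \<times> (\<Pi>\<^sub>E l\<in>{..<m}. GF s :: F2bar set)"
  have "finite ?C" "card ?C = (2 ^ s) ^ Suc m"
    using card_GF[OF assms, where 'a = F2bar] by (simp_all add: card_PiE finite_PiE card_cartesian_product)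
  then show ?thesis unfolding coordinate_def by (metis bij_betw_from_nat_into_finite)
qed

lemma bij_betw_direction:
  assumes "s \<ge> 1" "m \<ge> 1"
  shows "bij_betw (direction s m) {..<(2 ^ s) ^ (m - 1)} (directions (GF s) m)"
proof -
  have "finite (directions (GF s :: F2bar set) m)"
    using card_GF(1)[OF assms(1), where 'a = F2bar] unfolding directions_def
    by (intro finite_Collect_conjI disjI1) (simp add: finite_PiE)
  moreover have "card (directions (GF s :: F2bar set) m) = (2 ^ s) ^ (m - 1)"
    using card_GF[OF assms(1), where 'a = F2bar] assms(2) by (simp add: card_directions)
  ultimately show ?thesis unfolding direction_def by (metis bij_betw_from_nat_into_finite)
qed

lemma interpolant_restrict [simp]: "interpolant A m n x (restrict v {..<m}) = interpolant A m n x v"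
  by (simp add: interpolant_def)

lemma interpolant_at_grid_point:
  assumes "finite A" "n \<le> card A ^ m" "i < n"
  shows "interpolant A m n x (grid_point A m i) = to_ac (x i)"
proof -
  have bij: "bij_betw (grid_point A m) {..<card A ^ m} (\<Pi>\<^sub>E l\<in>{..<m}. A)"
    using bij_betw_grid_point[OF assms(1)] .
  have "lagrange A m (grid_point A m i') (grid_point A m i) = (if i' = i then 1 else 0)"
    if "i' < n" for i'
    using that assms bij_betw_apply[OF bij] bij_betw_imp_inj_on[OF bij]
    by (subst lagrange_at_grid) (auto simp: inj_on_eq_iff)
  then have "interpolant A m n x (grid_point A m i) = (\<Sum>i'<n. if i' = i then to_ac (x i) else 0)"
    unfolding interpolant_def by (intro sum.cong) auto
  then show ?thesis using assms(3) by simp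
qed

lemma interpolant_along_line:
  assumes "finite A" "n \<le> card A ^ m"
  shows "\<exists>P. degree P \<le> m * (card A - 1) \<and> (\<forall>t. interpolant A m n x (\<lambda>l. u l + t * d l) = poly P t)"
proof -
  have "\<forall>i\<in>{..<n}. \<exists>P. degree P \<le> m * (card A - 1) \<and>
      (\<forall>t. lagrange A m (grid_point A m i) (\<lambda>l. u l + t * d l) = poly P t)"
    using assms grid_point_in_PiE[OF assms(1)] by (intro ballI lagrange_along_line) auto
  then obtain P where P: "\<And>i. i < n \<Longrightarrow> degree (P i) \<le> m * (card A - 1) \<and>
      (\<forall>t. lagrange A m (grid_point A m i) (\<lambda>l. u l + t * d l) = poly (P i) t)"
    by (metis lessThan_iff)
  show ?thesis
  proof (intro exI conjI allI)
    show "degree (\<Sum>i<n. smult (to_ac (x i)) (P i)) \<le> m * (card A - 1)"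
      using P by (intro degree_sum_le) (auto intro: order_trans[OF degree_smult_le])
    show "interpolant A m n x (\<lambda>l. u l + t * d l) = poly (\<Sum>i<n. smult (to_ac (x i)) (P i)) t" for t
      using P by (simp add: interpolant_def poly_sum)
  qed
qed

lemma interpolant_in_GF:
  assumes "A \<subseteq> GF s" "finite A" "n \<le> card A ^ m" "p \<in> (\<Pi>\<^sub>E l\<in>{..<m}. GF s)"
  shows "interpolant A m n x p \<in> GF s"
proof -
  have "to_ac b \<in> GF s" for b :: bit by (cases b) simp_all
  moreover have "lagrange A m (grid_point A m i) p \<in> GF s" if "i < n" for i
    using grid_point_in_PiE[OF assms(2), of i m] that assms by (intro lagrange_in_GF) auto
  ultimately show ?thesis unfolding interpolant_def by (intro GF_sum GF_mult) auto
qed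

lemma encode_trace_generator:
  assumes "s \<ge> 1" "A \<subseteq> GF s" "finite A" "n \<le> card A ^ m"
    and "c < (2 ^ s) ^ Suc m" "coordinate s m c = (w, p)"
  shows "to_ac (encode (trace_generator s m A) ((2 ^ s) ^ Suc m) n x c) = trace s (w * interpolant A m n x p)"
proof -
  have "(w, p) \<in> GF s \<times> (\<Pi>\<^sub>E l\<in>{..<m}. GF s)"
    using assms(5,6) bij_betw_apply[OF bij_betw_coordinate[OF assms(1)]] by fastforce
  then have w: "w \<in> GF s" and p: "p \<in> (\<Pi>\<^sub>E l\<in>{..<m}. GF s)" by auto
  have "grid_point A m i \<in> (\<Pi>\<^sub>E l\<in>{..<m}. A)" if "i < n" for i
    using grid_point_in_PiE[OF assms(3)] that assms(4) by simp
  then have "trace s (w * lagrange A m (grid_point A m i) p) \<in> range to_ac" if "i < n" for i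
    using that w p assms(2) unfolding GF_1_F2bar[symmetric]
    by (intro trace_in_GF_1 GF_mult lagrange_in_GF) auto
  then have gen: "to_ac (trace_generator s m A c i) = trace s (w * lagrange A m (grid_point A m i) p)"
    if "i < n" for i
    using that assms(6) by (simp add: trace_generator_def to_ac_of_ac)
  have "to_ac (encode (trace_generator s m A) ((2 ^ s) ^ Suc m) n x c) =
      (\<Sum>i<n. to_ac (trace_generator s m A c i) * to_ac (x i))"
    unfolding encode_def using assms(5) by (simp only: if_True to_ac_sum to_ac_mult)
  also have "\<dots> = (\<Sum>i<n. to_ac (x i) * trace s (w * lagrange A m (grid_point A m i) p))"
    using gen by (intro sum.cong) (simp_all add: mult.commute)
  also have "\<dots> = (\<Sum>i<n. trace s (to_ac (x i) * (w * lagrange A m (grid_point A m i) p)))"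
    using GF_1_F2bar by (simp add: trace_scale)
  also have "\<dots> = trace s (w * interpolant A m n x p)"
    by (simp add: interpolant_def sum_distrib_left trace_sum mult.left_commute)
  finally show ?thesis .
qed

lemma interpolant_determined_by_recovery_set:
  assumes "s \<ge> 1" "A \<subseteq> GF s" "finite A" "n \<le> card A ^ m"
    and agree: "restrict_word (recovery_set s m A i j) (encode (trace_generator s m A) ((2 ^ s) ^ Suc m) n x)
      = restrict_word (recovery_set s m A i j) (encode (trace_generator s m A) ((2 ^ s) ^ Suc m) n y)"
    and on_line: "p \<in> punctured_line (GF s) m (grid_point A m i) (direction s m j)"
    and p: "p \<in> (\<Pi>\<^sub>E l\<in>{..<m}. GF s)"
  shows "interpolant A m n x p = interpolant A m n y p"
proof -
  define \<delta> where "\<delta> = interpolant A m n x p - interpolant A m n y p"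
  have "\<delta> \<in> GF s" unfolding \<delta>_def using assms by (intro GF_diff interpolant_in_GF)
  moreover have "trace s (w * \<delta>) = 0" if w: "w \<in> GF s" for w
  proof -
    obtain c where c: "c < (2 ^ s) ^ Suc m" "coordinate s m c = (w, p)"
      using bij_betw_imp_surj_on[OF bij_betw_coordinate[OF assms(1)]] w p
      by (metis (no_types, lifting) SigmaI imageE lessThan_iff)
    then have "c \<in> recovery_set s m A i j" using on_line by (simp add: recovery_set_def)
    then have "encode (trace_generator s m A) ((2 ^ s) ^ Suc m) n x c =
        encode (trace_generator s m A) ((2 ^ s) ^ Suc m) n y c"
      using fun_cong[OF agree, of c] by (simp add: restrict_word_def)
    then have "trace s (w * interpolant A m n x p) = trace s (w * interpolant A m n y p)"
      using encode_trace_generator[OF assms(1-4) c] by metis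
    then show ?thesis by (simp add: \<delta>_def right_diff_distrib trace_diff)
  qed
  ultimately have "\<delta> = 0" using trace_nondegenerate[OF assms(1)] by blast
  then show ?thesis by (simp add: \<delta>_def)
qed

lemma recovery_set_determines_bit:
  assumes "s \<ge> 1" "m \<ge> 1" "A \<subseteq> GF s" "finite A" "m * (card A - 1) + 2 \<le> 2 ^ s"
    and "n \<le> card A ^ m" "i < n" "j < (2 ^ s) ^ (m - 1)"
    and agree: "restrict_word (recovery_set s m A i j) (encode (trace_generator s m A) ((2 ^ s) ^ Suc m) n x)
      = restrict_word (recovery_set s m A i j) (encode (trace_generator s m A) ((2 ^ s) ^ Suc m) n y)"
  shows "x i = y i"
proof -
  define u where "u = grid_point A m i"
  define d where "d = direction s m j"
  have "u \<in> (\<Pi>\<^sub>E l\<in>{..<m}. A)"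
    using grid_point_in_PiE[OF assms(4), of i m] assms(6,7) by (simp add: u_def)
  then have u: "u \<in> (\<Pi>\<^sub>E l\<in>{..<m}. GF s)"
    using PiE_mono[of "{..<m}" "\<lambda>_. A" "\<lambda>_. GF s"] assms(3) by blast
  have d: "d \<in> (\<Pi>\<^sub>E l\<in>{..<m}. GF s)"
    using bij_betw_apply[OF bij_betw_direction[OF assms(1,2)]] assms(8) by (simp add: d_def directions_def)
  obtain Px where Px: "degree Px \<le> m * (card A - 1)" "\<And>t. interpolant A m n x (\<lambda>l. u l + t * d l) = poly Px t"
    using interpolant_along_line[OF assms(4,6)] by blast
  obtain Py where Py: "degree Py \<le> m * (card A - 1)" "\<And>t. interpolant A m n y (\<lambda>l. u l + t * d l) = poly Py t"
    using interpolant_along_line[OF assms(4,6)] by blast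
  have "poly Px t = poly Py t" if t: "t \<in> GF s - {0}" for t
  proof -
    let ?p = "\<lambda>l\<in>{..<m}. u l + t * d l"
    have "?p \<in> punctured_line (GF s) m u d" using t by (auto simp: punctured_line_def)
    moreover have "?p \<in> (\<Pi>\<^sub>E l\<in>{..<m}. GF s)" using u d t by (intro line_point_in_PiE) auto
    ultimately have "interpolant A m n x ?p = interpolant A m n y ?p"
      unfolding u_def d_def by (rule interpolant_determined_by_recovery_set[OF assms(1,3,4,6) agree])
    then show ?thesis using Px Py by simp
  qed
  moreover have "card (GF s - {0} :: F2bar set) = 2 ^ s - 1"
    using card_GF[OF assms(1), where 'a = F2bar] by (simp add: card_Diff_singleton)
  ultimately have "Px = Py" using Px(1) Py(1) assms(5) by (intro poly_eqI_degree[of "GF s - {0}"]) auto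
  then have "interpolant A m n x u = interpolant A m n y u" using Px(2)[of 0] Py(2)[of 0] by simp
  then show ?thesis using interpolant_at_grid_point[OF assms(4,6,7)] by (simp add: u_def)
qed

lemma decoder_exists:
  assumes "\<And>x y. x \<in> M \<Longrightarrow> y \<in> M \<Longrightarrow> g x = g y \<Longrightarrow> h x = h y"
  shows "\<exists>f. \<forall>x\<in>M. f (g x) = h x"
proof (intro exI ballI)
  fix x assume "x \<in> M"
  then have "(SOME z. z \<in> M \<and> g z = g x) \<in> M \<and> g (SOME z. z \<in> M \<and> g z = g x) = g x"
    by (intro someI) simp
  then show "h (SOME z. z \<in> M \<and> g z = g x) = h x" using assms \<open>x \<in> M\<close> by blast
qed

lemma is_PIR_codeI:
  assumes "0 < k"
    and "\<And>i j. i < n \<Longrightarrow> j < k \<Longrightarrow> R i j \<subseteq> {..<N}"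
    and "\<And>i j j'. i < n \<Longrightarrow> j < k \<Longrightarrow> j' < k \<Longrightarrow> j \<noteq> j' \<Longrightarrow> R i j \<inter> R i j' = {}"
    and recover: "\<And>i j x y. i < n \<Longrightarrow> j < k \<Longrightarrow> x \<in> msgs n \<Longrightarrow> y \<in> msgs n \<Longrightarrow>
      restrict_word (R i j) (encode G N n x) = restrict_word (R i j) (encode G N n y) \<Longrightarrow> x i = y i"
  shows "is_PIR_code G N n k"
  unfolding is_PIR_code_def
proof (intro conjI allI impI)
  show "inj_on (encode G N n) (msgs n)"
  proof (rule inj_onI)
    fix x y assume x: "x \<in> msgs n" and y: "y \<in> msgs n" and eq: "encode G N n x = encode G N n y"
    show "x = y"
    proof
      fix i show "x i = y i"
      proof (cases "i < n")
        case True
        then show ?thesis using recover[OF True \<open>0 < k\<close> x y] eq by simp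
      next
        case False
        then show ?thesis using x y by (simp add: msgs_def)
      qed
    qed
  qed
  fix i assume "i < n"
  show "\<exists>R. (\<forall>j<k. R j \<subseteq> {..<N}) \<and> (\<forall>j<k. \<forall>j'<k. j \<noteq> j' \<longrightarrow> R j \<inter> R j' = {}) \<and>
      (\<forall>j<k. \<exists>f. \<forall>x\<in>msgs n. f (restrict_word (R j) (encode G N n x)) = x i)"
  proof (intro exI[of _ "R i"] conjI allI impI)
    fix j assume "j < k"
    then show "R i j \<subseteq> {..<N}" by (rule assms(2)[OF \<open>i < n\<close>])
  next
    fix j j' assume "j < k" "j' < k" "j \<noteq> j'"
    then show "R i j \<inter> R i j' = {}" by (rule assms(3)[OF \<open>i < n\<close>])
  next
    fix j assume "j < k"
    show "\<exists>f. \<forall>x\<in>msgs n. f (restrict_word (R i j) (encode G N n x)) = x i"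
      using recover[OF \<open>i < n\<close> \<open>j < k\<close>] by (intro decoder_exists)
  qed
qed

lemma PIR_code_exists_trace_code:
  assumes "s \<ge> 1" "m \<ge> 1" "m * (a - 1) + 2 \<le> 2 ^ s" "n \<le> a ^ m" "0 < k" "k \<le> (2 ^ s) ^ (m - 1)"
  shows "PIR_code_exists ((2 ^ s) ^ Suc m) n k"
proof -
  have "a - 1 \<le> m * (a - 1)" using assms(2) by simp
  then have "a \<le> 2 ^ s" using assms(3) by linarith
  then have "a \<le> card (GF s :: F2bar set)" using card_GF(2)[OF assms(1), where 'a = F2bar] by simp
  then obtain A :: "F2bar set" where A: "A \<subseteq> GF s" "card A = a" "finite A"
    by (rule obtain_subset_with_card_n)
  have "is_PIR_code (trace_generator s m A) ((2 ^ s) ^ Suc m) n k"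
  proof (rule is_PIR_codeI[where R = "recovery_set s m A"])
    fix i j assume "j < k"
    then show "recovery_set s m A i j \<subseteq> {..<(2 ^ s) ^ Suc m}" by (auto simp: recovery_set_def)
  next
    fix i j j' assume j: "j < k" "j' < k" "j \<noteq> j'"
    have bij: "bij_betw (direction s m) {..<(2 ^ s) ^ (m - 1)} (directions (GF s) m)"
      using bij_betw_direction[OF assms(1,2)] .
    have dirs: "direction s m j \<in> directions (GF s) m" "direction s m j' \<in> directions (GF s) m"
      using bij_betw_apply[OF bij] j(1,2) assms(6) by auto
    have "direction s m j \<noteq> direction s m j'"
      using inj_onD[OF bij_betw_imp_inj_on[OF bij]] j assms(6) by fastforce
    then show "recovery_set s m A i j \<inter> recovery_set s m A i j' = {}"
      using punctured_lines_disjoint[OF assms(2) dirs] by (auto simp: recovery_set_def)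
  next
    fix i j x y
    assume "i < n" "j < k" "x \<in> msgs n" "y \<in> msgs n"
      and agree: "restrict_word (recovery_set s m A i j) (encode (trace_generator s m A) ((2 ^ s) ^ Suc m) n x) =
        restrict_word (recovery_set s m A i j) (encode (trace_generator s m A) ((2 ^ s) ^ Suc m) n y)"
    then show "x i = y i"
      using recovery_set_determines_bit[OF assms(1,2) A(1,3) _ _ \<open>i < n\<close> _ agree] A(2) assms(3,4,6) by simp
  qed (rule assms(5))
  then show ?thesis unfolding PIR_code_exists_def by blast
qed

section \<open>Choice of parameters\<close>

lemma ceiling_log2_bounds:
  fixes B :: real
  assumes "B \<ge> 1"
  shows "B \<le> 2 ^ nat \<lceil>log 2 B\<rceil>" and "2 ^ nat \<lceil>log 2 B\<rceil> \<le> 2 * B"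
proof -
  have pow: "(2::real) ^ nat \<lceil>log 2 B\<rceil> = 2 powr \<lceil>log 2 B\<rceil>"
    using assms by (simp add: powr_realpow[symmetric])
  have "B = 2 powr log 2 B" using assms by simp
  also have "\<dots> \<le> 2 powr \<lceil>log 2 B\<rceil>" by (intro powr_mono) auto
  finally show "B \<le> 2 ^ nat \<lceil>log 2 B\<rceil>" using pow by simp
  have "(2::real) powr \<lceil>log 2 B\<rceil> \<le> 2 powr (log 2 B + 1)" by (intro powr_mono) linarith+
  also have "\<dots> = 2 * B" using assms by (simp add: powr_add)
  finally show "2 ^ nat \<lceil>log 2 B\<rceil> \<le> 2 * B" using pow by simp
qed

lemma le_power_ceiling_root:
  assumes "m \<ge> 1"
  shows "n \<le> nat \<lceil>real n powr (1 / real m)\<rceil> ^ m"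
proof -
  have "real n = (real n powr (1 / real m)) ^ m" using assms by (cases "n = 0") (simp_all add: powr_power)
  also have "\<dots> \<le> real (nat \<lceil>real n powr (1 / real m)\<rceil>) ^ m" by (intro power_mono) auto
  finally show ?thesis by (metis of_nat_le_iff of_nat_power)
qed

text \<open>\<open>q = 2 ^ field_exp \<epsilon> m n\<close> is the least power of two above
  \<open>(m + 2)(n^(\<epsilon>/(m-1)) + 1)\<close>, which leaves room both for the grid side \<open>\<lceil>n^(1/m)\<rceil>\<close>
  and for \<open>n^\<epsilon> = (n^(\<epsilon>/(m-1)))^(m-1)\<close> recovery sets.\<close>

definition field_exp :: "real \<Rightarrow> nat \<Rightarrow> nat \<Rightarrow> nat" where
  "field_exp \<epsilon> m n = nat \<lceil>log 2 ((real m + 2) * (real n powr (\<epsilon> / (real m - 1)) + 1))\<rceil>"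

lemma field_exp_bounds:
  fixes \<epsilon> :: real
  assumes "n \<ge> 1" "m \<ge> 2"
  defines "r \<equiv> real n powr (\<epsilon> / (real m - 1))"
  shows "(real m + 2) * (r + 1) \<le> 2 ^ field_exp \<epsilon> m n"
    and "2 ^ field_exp \<epsilon> m n \<le> 2 * (real m + 2) * (r + 1)"
proof -
  have B: "1 \<le> (real m + 2) * (r + 1)"
    using mult_mono[of 1 "real m + 2" 1 "r + 1"] unfolding r_def by simp
  show "(real m + 2) * (r + 1) \<le> 2 ^ field_exp \<epsilon> m n"
    using ceiling_log2_bounds(1)[OF B] unfolding field_exp_def r_def by simp
  show "2 ^ field_exp \<epsilon> m n \<le> 2 * (real m + 2) * (r + 1)"
    using ceiling_log2_bounds(2)[OF B] unfolding field_exp_def r_def by (simp only: mult.assoc)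
qed

lemma field_exp_ge_1:
  assumes "n \<ge> 1" "m \<ge> 2"
  shows "field_exp \<epsilon> m n \<ge> 1"
proof (rule ccontr)
  assume "\<not> field_exp \<epsilon> m n \<ge> 1"
  then have "field_exp \<epsilon> m n = 0" by simp
  then have "(real m + 2) * (real n powr (\<epsilon> / (real m - 1)) + 1) \<le> 1"
    using field_exp_bounds(1)[OF assms, of \<epsilon>] by simp
  moreover have "(real m + 2) * (real n powr (\<epsilon> / (real m - 1)) + 1) \<ge> 4 * 1"
    using assms(2) by (intro mult_mono) auto
  ultimately show False by simp
qed

lemma grid_fits_field_exp:
  fixes \<epsilon> :: real
  assumes "\<epsilon> \<ge> 1" "n \<ge> 1" "m \<ge> 2"
  defines "a \<equiv> nat \<lceil>real n powr (1 / real m)\<rceil>"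
  shows "m * (a - 1) + 2 \<le> 2 ^ field_exp \<epsilon> m n"
proof -
  define r where "r = real n powr (\<epsilon> / (real m - 1))"
  have r: "r \<ge> 1" unfolding r_def using assms by (intro ge_one_powr_ge_zero) auto
  have "real a = of_int \<lceil>real n powr (1 / real m)\<rceil>" unfolding a_def by simp
  then have "real a - 1 \<le> real n powr (1 / real m)"
    using ceiling_correct[of "real n powr (1 / real m)"] by linarith
  also have "\<dots> \<le> r"
  proof -
    have "1 / real m \<le> 1 / (real m - 1)" using assms(3) by (intro divide_left_mono) auto
    also have "\<dots> \<le> \<epsilon> / (real m - 1)" using assms by (intro divide_right_mono) auto
    finally show ?thesis unfolding r_def using assms(2) by (intro powr_mono) auto
  qed
  finally have "real (m * (a - 1) + 2) \<le> real m * r + 2"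
    using assms(3) r by (cases a) (auto simp: mult_left_mono)
  also have "\<dots> \<le> 2 ^ field_exp \<epsilon> m n"
    using field_exp_bounds(1)[OF assms(2,3), of \<epsilon>] r by (simp add: r_def algebra_simps)
  finally show ?thesis by (metis of_nat_le_iff of_nat_numeral of_nat_power)
qed

lemma redundancy_fits_field_exp:
  fixes \<epsilon> :: real
  assumes "\<epsilon> \<ge> 0" "n \<ge> 1" "m \<ge> 2"
  shows "nat \<lceil>real n powr \<epsilon>\<rceil> \<le> (2 ^ field_exp \<epsilon> m n) ^ (m - 1)"
proof -
  define r where "r = real n powr (\<epsilon> / (real m - 1))"
  have r: "r \<ge> 1" unfolding r_def using assms by (intro ge_one_powr_ge_zero) auto
  have "real n powr \<epsilon> = r ^ (m - 1)"
    unfolding r_def using assms by (simp add: powr_power of_nat_diff)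
  also have "\<dots> \<le> (2 ^ field_exp \<epsilon> m n) ^ (m - 1)"
  proof (intro power_mono)
    have "1 * r \<le> (real m + 2) * (r + 1)" using r by (intro mult_mono) auto
    then show "r \<le> 2 ^ field_exp \<epsilon> m n" using field_exp_bounds(1)[OF assms(2,3), of \<epsilon>] by (simp add: r_def)
  qed (use r in simp)
  finally show ?thesis by (simp add: nat_le_iff ceiling_le_iff)
qed

lemma PIR_code_exists_field_exp:
  fixes \<epsilon> :: real
  assumes "\<epsilon> \<ge> 1" "n \<ge> 1" "m \<ge> 2"
  shows "PIR_code_exists ((2 ^ field_exp \<epsilon> m n) ^ Suc m) n (nat \<lceil>real n powr \<epsilon>\<rceil>)"
proof (rule PIR_code_exists_trace_code)
  show "field_exp \<epsilon> m n \<ge> 1" "m \<ge> 1" using field_exp_ge_1 assms by auto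
  show "n \<le> nat \<lceil>real n powr (1 / real m)\<rceil> ^ m" using assms(3) by (intro le_power_ceiling_root) simp
  have "real n powr \<epsilon> \<ge> 1" using assms by (intro ge_one_powr_ge_zero) auto
  then show "0 < nat \<lceil>real n powr \<epsilon>\<rceil>" by linarith
qed (use assms grid_fits_field_exp redundancy_fits_field_exp in auto)

lemma code_length_le:
  assumes "\<epsilon> \<ge> 0" "n \<ge> 1" "m \<ge> 2"
  shows "real ((2 ^ field_exp \<epsilon> m n) ^ Suc m)
    \<le> (4 * (real m + 2)) ^ Suc m * real n powr (\<epsilon> * (real m + 1) / (real m - 1))"
proof -
  define r where "r = real n powr (\<epsilon> / (real m - 1))"
  have r: "r \<ge> 1" unfolding r_def using assms by (intro ge_one_powr_ge_zero) auto
  have "real ((2 ^ field_exp \<epsilon> m n) ^ Suc m) = (2 ^ field_exp \<epsilon> m n) ^ Suc m" by simp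
  also have "\<dots> \<le> (2 * (real m + 2) * (r + 1)) ^ Suc m"
    using field_exp_bounds(2)[OF assms(2,3), of \<epsilon>] by (intro power_mono) (simp_all add: r_def)
  also have "\<dots> \<le> (4 * (real m + 2) * r) ^ Suc m"
  proof (intro power_mono)
    have "2 * (real m + 2) * (r + 1) \<le> 2 * (real m + 2) * (2 * r)" using r by (intro mult_left_mono) auto
    also have "\<dots> = 4 * (real m + 2) * r" by simp
    finally show "2 * (real m + 2) * (r + 1) \<le> 4 * (real m + 2) * r" .
  qed (use r in auto)
  also have "\<dots> = (4 * (real m + 2)) ^ Suc m * r ^ Suc m" by (simp add: power_mult_distrib)
  also have "r ^ Suc m = real n powr (real (Suc m) * (\<epsilon> / (real m - 1)))"
    unfolding r_def using assms(2) by (subst powr_power) auto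
  also have "real (Suc m) * (\<epsilon> / (real m - 1)) = \<epsilon> * (real m + 1) / (real m - 1)" by simp
  finally show ?thesis .
qed

lemma eventually_ln_ge: "\<forall>\<^sub>F n in sequentially. c \<le> ln (real n)"
  using filterlim_compose[OF ln_at_top filterlim_real_sequentially] by (simp add: filterlim_at_top)

lemma powr_quarter_ge:
  fixes c L :: real
  assumes "0 \<le> c" "c ^ 4 \<le> L"
  shows "c \<le> L powr (1 / 4)"
proof -
  have "c ^ 4 = c powr 4" using powr_realpow'[of c 4] assms(1) by simp
  then have "(c ^ 4) powr (1 / 4) = c powr (4 * (1 / 4))" by (simp only: powr_powr)
  also have "\<dots> = c" using assms(1) by simp
  finally have "c = (c ^ 4) powr (1 / 4)" ..
  also have "\<dots> \<le> L powr (1 / 4)" using assms by (intro powr_mono2) auto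
  finally show ?thesis .
qed

text \<open>The dimension \<open>m \<approx> (ln n)^(1/4)\<close> grows slowly enough that
  \<open>(4(m + 2))^(m+1) \<le> n^(1/m)\<close> eventually.\<close>

definition code_dim :: "nat \<Rightarrow> nat" where
  "code_dim n = max 2 (nat \<lfloor>ln (real n) powr (1 / 4)\<rfloor>)"

lemma code_dim_ge_2: "code_dim n \<ge> 2"
  by (simp add: code_dim_def)

lemma eventually_code_dim_ge: "\<forall>\<^sub>F n in sequentially. M \<le> code_dim n"
  using eventually_ln_ge[of "real M ^ 4"]
proof eventually_elim
  case (elim n)
  then have "real M \<le> ln (real n) powr (1 / 4)" by (intro powr_quarter_ge) auto
  then show ?case unfolding code_dim_def by linarith
qed

lemma power_le_root_if_ln_large:
  assumes "m \<ge> 2" "0 < x" "16 * real m ^ 3 \<le> ln x"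
  shows "(4 * (real m + 2)) ^ Suc m \<le> x powr (1 / real m)"
proof -
  have "real m * (real m + 1) * ln (4 * (real m + 2)) \<le> real m * (real m + 1) * (4 * (real m + 2))"
    using ln_le_minus_one[of "4 * (real m + 2)"] by (intro mult_left_mono) auto
  also have "\<dots> \<le> real m * (2 * real m) * (4 * (2 * real m))"
    using assms(1) by (intro mult_mono) auto
  also have "\<dots> = 16 * real m ^ 3" by (simp add: power3_eq_cube)
  finally have "real (Suc m) * ln (4 * (real m + 2)) \<le> 1 / real m * ln x"
    using assms by (simp add: field_simps)
  moreover have "ln ((4 * (real m + 2)) ^ Suc m) = real (Suc m) * ln (4 * (real m + 2))"
    by (rule ln_realpow)
  moreover have "ln (x powr (1 / real m)) = 1 / real m * ln x"
    using assms(2) by (simp add: ln_powr)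
  ultimately have "ln ((4 * (real m + 2)) ^ Suc m) \<le> ln (x powr (1 / real m))" by simp
  then show ?thesis using assms(2) by (subst (asm) ln_le_cancel_iff) auto
qed

lemma eventually_code_dim_power_le_root:
  "\<forall>\<^sub>F n in sequentially.
     (4 * (real (code_dim n) + 2)) ^ Suc (code_dim n) \<le> real n powr (1 / real (code_dim n))"
  using eventually_ln_ge[of "16 ^ 4"] eventually_ge_at_top[of 1]
proof eventually_elim
  case (elim n)
  define u where "u = ln (real n) powr (1 / 4)"
  have u: "16 \<le> u" unfolding u_def using elim by (intro powr_quarter_ge) auto
  have "u ^ 4 = ln (real n) powr ((1 / 4) * 4)"
    using elim powr_realpow'[of u 4] u by (simp add: u_def powr_powr)
  then have u4: "u ^ 4 = ln (real n)" using elim by simp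
  have "code_dim n = nat \<lfloor>u\<rfloor>" using u by (simp add: code_dim_def u_def[symmetric] le_nat_floor)
  then have "real (code_dim n) \<le> u" using u by linarith
  then have "16 * real (code_dim n) ^ 3 \<le> u * u ^ 3"
    using u by (intro mult_mono power_mono) auto
  also have "\<dots> = ln (real n)" using u4 by (simp add: power_Suc[symmetric] del: power_Suc)
  finally show ?case using elim code_dim_ge_2 by (intro power_le_root_if_ln_large) auto
qed

lemma code_length_exponent_le:
  fixes \<epsilon> \<tau> :: real
  assumes "\<epsilon> \<ge> 0" "\<tau> > 0" "m \<ge> 2" "(2 * \<epsilon> + 1) / \<tau> + 1 \<le> real m"
  shows "1 / real m + \<epsilon> * (real m + 1) / (real m - 1) \<le> \<epsilon> + \<tau>"
proof -
  have m: "real m - 1 > 0" using assms(3) by simp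
  have "(2 * \<epsilon> + 1) / \<tau> \<le> real m - 1" using assms(4) by simp
  then have "(2 * \<epsilon> + 1) / (real m - 1) \<le> \<tau>" using assms(2) m by (simp add: field_simps)
  moreover have "1 / real m \<le> 1 / (real m - 1)" using m by (intro divide_left_mono) auto
  moreover have "\<epsilon> * (real m + 1) / (real m - 1) = \<epsilon> + 2 * \<epsilon> / (real m - 1)"
    using m by (simp add: field_simps)
  ultimately show ?thesis by (simp add: add_divide_distrib)
qed

lemma code_length_eventually_le:
  assumes "\<epsilon> \<ge> 1" "\<tau> > 0"
  shows "\<forall>\<^sub>F n in sequentially.
    real ((2 ^ field_exp \<epsilon> (code_dim n) n) ^ Suc (code_dim n)) \<le> real n powr (\<epsilon> + \<tau>)"
  using eventually_ge_at_top[of 1] eventually_code_dim_ge[of "nat \<lceil>(2 * \<epsilon> + 1) / \<tau> + 1\<rceil>"]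
    eventually_code_dim_power_le_root
proof eventually_elim
  case (elim n)
  define m where "m = code_dim n"
  have m: "m \<ge> 2" unfolding m_def by (rule code_dim_ge_2)
  have "(2 * \<epsilon> + 1) / \<tau> + 1 \<le> real m" using elim(2) unfolding m_def by linarith
  then have exponent: "1 / real m + \<epsilon> * (real m + 1) / (real m - 1) \<le> \<epsilon> + \<tau>"
    using assms m by (intro code_length_exponent_le) auto
  have "real ((2 ^ field_exp \<epsilon> m n) ^ Suc m)
      \<le> (4 * (real m + 2)) ^ Suc m * real n powr (\<epsilon> * (real m + 1) / (real m - 1))"
    using assms elim(1) m by (intro code_length_le) auto
  also have "\<dots> \<le> real n powr (1 / real m) * real n powr (\<epsilon> * (real m + 1) / (real m - 1))"
    using elim(3) unfolding m_def by (intro mult_right_mono) auto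
  also have "\<dots> = real n powr (1 / real m + \<epsilon> * (real m + 1) / (real m - 1))"
    by (simp add: powr_add)
  also have "\<dots> \<le> real n powr (\<epsilon> + \<tau>)" using exponent elim(1) by (intro powr_mono) auto
  finally show ?case unfolding m_def .
qed

lemma ceiling_powr_bigtheta:
  fixes \<epsilon> :: real
  assumes "\<epsilon> \<ge> 0"
  shows "(\<lambda>n. real (nat \<lceil>real n powr \<epsilon>\<rceil>)) \<in> \<Theta>(\<lambda>n. real n powr \<epsilon>)"
proof (rule bigthetaI'[of 1 2])
  show "\<forall>\<^sub>F n in at_top. 1 * norm (real n powr \<epsilon>) \<le> norm (real (nat \<lceil>real n powr \<epsilon>\<rceil>)) \<and>
      norm (real (nat \<lceil>real n powr \<epsilon>\<rceil>)) \<le> 2 * norm (real n powr \<epsilon>)"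
    using eventually_ge_at_top[of 1]
  proof eventually_elim
    case (elim n)
    have "real n powr \<epsilon> \<ge> 1" using elim assms by (intro ge_one_powr_ge_zero) auto
    then show ?case by simp linarith
  qed
qed auto

theorem theorem5:
  fixes \<epsilon> :: real
  assumes "\<epsilon> \<ge> 1"
  shows "\<exists>N k :: nat \<Rightarrow> nat.
           (\<forall>\<^sub>F n in sequentially. PIR_code_exists (N n) n (k n)) \<and>
           (\<lambda>n. real (k n)) \<in> \<Theta>(\<lambda>n. real n powr \<epsilon>) \<and>
           (\<forall>\<tau>>0. (\<lambda>n. real (N n)) \<in> O(\<lambda>n. real n powr (\<epsilon> + \<tau>)))"
proof -
  define N :: "nat \<Rightarrow> nat" where "N n = (2 ^ field_exp \<epsilon> (code_dim n) n) ^ Suc (code_dim n)" for n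
  define k where "k n = nat \<lceil>real n powr \<epsilon>\<rceil>" for n :: nat
  have "\<forall>\<^sub>F n in sequentially. PIR_code_exists (N n) n (k n)"
    using eventually_ge_at_top[of 1]
    by eventually_elim (unfold N_def k_def, rule PIR_code_exists_field_exp[OF assms _ code_dim_ge_2])
  moreover have "(\<lambda>n. real (k n)) \<in> \<Theta>(\<lambda>n. real n powr \<epsilon>)"
    unfolding k_def using assms by (intro ceiling_powr_bigtheta) simp
  moreover have "(\<lambda>n. real (N n)) \<in> O(\<lambda>n. real n powr (\<epsilon> + \<tau>))" if "\<tau> > 0" for \<tau>
    using code_length_eventually_le[OF assms that]
    by (intro bigoI[where c = 1]) (auto simp: N_def elim!: eventually_mono)
  ultimately show ?thesis by blast
qed

end
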